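(* There exists a constant $C$ such that for all $n\in\mathbb{N}$ and all $\mathbf{x}\in C_0([0,1],G(\mathbb{R}^d))$ with $0<\|\mathbf{x}\|_{\phi_p}<\infty$, \[ \frac{d_\infty(\mathbf{x},\Upsilon_n(\mathbf{x}))}{\|\mathbf{x}\|_{\phi_p}}\leq C\sqrt{\phi_p(2^{-n})}. \]
   Context: Fix $d\geq2$, $p\in(2,3)$. $G(\mathbb{R}^d)$ is the set of $g=(g^1,g^2)\in\mathbb{R}^d\oplus(\mathbb{R}^d\otimes\mathbb{R}^d)$ whose symmetric part of $g^2$ is $\frac12g^1\otimes g^1$, with product $g\otimes h=(g^1+h^1,g^2+g^1\otimes h^1+h^2)$, identity $(0,0)=:\exp(0)$, inverse $(g^1,g^2)^{-1}=(-g^1,-g^2+g^1\otimes g^1)$; $\exp(a^1,a^2)=(a^1,a^2+\frac12a^1\otimes a^1)$ for antisymmetric $a^2$, $\exp(x):=\exp(x,0)$; dilation $\delta_\lambda\exp(a^1,a^2)=\exp(\lambda a^1,\lambda^2a^2)$; $\|g\|=\inf\{\sum_i|x^i|:x^i\in\mathbb{R}^d,\exp(x^1)\otimes\cdots\otimes\exp(x^k)=g\}$. $C_0([0,1],G(\mathbb{R}^d))$: continuous paths with $\mathbf{x}_0=\exp(0)$; $\mathbf{x}_{s,t}=\mathbf{x}_s^{-1}\otimes\mathbf{x}_t$; $\|\mathbf{x}\|_\psi=\sup_{0\leq s<t\leq1}\|\mathbf{x}_{s,t}\|/\psi(t-s)$; $d_\infty(\mathbf{x},\mathbf{y})=\sup_{0\leq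 s<t\leq1}\|\mathbf{x}_{s,t}^{-1}\otimes\mathbf{y}_{s,t}\|$. $\Upsilon_n(\mathbf{x})$ is the path with $\Upsilon_n(\mathbf{x})_{k/2^n}=\mathbf{x}_{k/2^n}$ for $k=0,\dots,2^n$ and $\Upsilon_n(\mathbf{x})_{k/2^n,\,k/2^n+t}=\delta_{2^nt}(\mathbf{x}_{k/2^n,(k+1)/2^n})$ for $t\in[0,2^{-n}]$, $k=0,\dots,2^n-1$. $\zeta(x)=\frac{1}{2\sqrt2}\int_0^x\sqrt{\log(1+u^{-2})/u}\,du$; $\phi_p$ is the $p$-th root of the smallest convex function on $[0,1]$ dominating $\zeta^p$. *)

theory Defs
  imports "HOL-Analysis.Analysis"
begin

text \<open>Step-2 free nilpotent group G(R^d): elements are pairs (g1, g2) with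
  g1 in R^d and g2 in R^d tensor R^d (a d x d matrix).\<close>

type_synonym ('d) grp = "(real^'d) \<times> ((real^'d)^'d)"

definition tens :: "real^('d::finite) \<Rightarrow> real^('d::finite) \<Rightarrow> real^'d^'d" where
  "tens a b = (\<chi> i j. a $ i * b $ j)"

definition Gset :: "('d::finite) grp set" where
  "Gset = {(g1, g2). (1/2) *\<^sub>R (g2 + transpose g2) = (1/2) *\<^sub>R tens g1 g1}"

definition gmul :: "('d::finite) grp \<Rightarrow> ('d::finite) grp \<Rightarrow> ('d::finite) grp" where
  "gmul g h = (fst g + fst h, snd g + tens (fst g) (fst h) + snd h)"

definition gid :: "('d::finite) grp" where
  "gid = (0, 0)"

definition ginv :: "('d::finite) grp \<Rightarrow> ('d::finite) grp" where
  "ginv g = (- fst g, - snd g + tens (fst g) (fst g))"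

text \<open>exp(a1,a2) for antisymmetric a2, and exp(x) = exp(x,0).\<close>
definition gexp2 :: "real^('d::finite) \<Rightarrow> real^'d^'d \<Rightarrow> ('d::finite) grp" where
  "gexp2 a1 a2 = (a1, a2 + (1/2) *\<^sub>R tens a1 a1)"

definition gexp :: "real^('d::finite) \<Rightarrow> ('d::finite) grp" where
  "gexp x = gexp2 x 0"

text \<open>Dilation: delta_lambda exp(a1,a2) = exp(lambda a1, lambda^2 a2), where
  a1 = g1 and a2 = g2 - 1/2 g1 tensor g1 is the antisymmetric part.\<close>
definition dil :: "real \<Rightarrow> ('d::finite) grp \<Rightarrow> ('d::finite) grp" where
  "dil r g = gexp2 (r *\<^sub>R fst g) (r\<^sup>2 *\<^sub>R (snd g - (1/2) *\<^sub>R tens (fst g) (fst g)))"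

definition ccnorm :: "('d::finite) grp \<Rightarrow> real" where
  "ccnorm g = Inf {sum_list (map norm xs) | xs.
                   foldr (\<lambda>v h. gmul (gexp v) h) xs gid = g}"

definition is_Gpath :: "(real \<Rightarrow> ('d::finite) grp) \<Rightarrow> bool" where
  "is_Gpath x \<longleftrightarrow> continuous_on {0..1} x \<and> (\<forall>t\<in>{0..1}. x t \<in> Gset) \<and> x 0 = gid"

definition incr :: "(real \<Rightarrow> ('d::finite) grp) \<Rightarrow> real \<Rightarrow> real \<Rightarrow> ('d::finite) grp" where
  "incr x s t = gmul (ginv (x s)) (x t)"

definition hnorm :: "(real \<Rightarrow> real) \<Rightarrow> (real \<Rightarrow> ('d::finite) grp) \<Rightarrow> ereal" where
  "hnorm \<psi> x = (SUP (s, t) \<in> {(s, t). 0 \<le> s \<and> s < t \<and> t \<le> 1}.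
                    ereal (ccnorm (incr x s t) / \<psi> (t - s)))"

definition dinf :: "(real \<Rightarrow> ('d::finite) grp) \<Rightarrow> (real \<Rightarrow> ('d::finite) grp) \<Rightarrow> ereal" where
  "dinf x y = (SUP (s, t) \<in> {(s, t). 0 \<le> s \<and> s < t \<and> t \<le> 1}.
                    ereal (ccnorm (gmul (ginv (incr x s t)) (incr y s t))))"

definition upsilon :: "nat \<Rightarrow> (real \<Rightarrow> ('d::finite) grp) \<Rightarrow> real \<Rightarrow> ('d::finite) grp" where
  "upsilon n x t =
     (let k = min (nat \<lfloor>2 ^ n * t\<rfloor>) (2 ^ n - 1);
          a = real k / 2 ^ n;
          b = (real k + 1) / 2 ^ n
      in gmul (x a) (dil (2 ^ n * (t - a)) (incr x a b)))"

definition zeta :: "real \<Rightarrow> real" where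
  "zeta x = 1 / (2 * sqrt 2) * integral {0..x} (\<lambda>u. sqrt (ln (1 + 1 / u\<^sup>2) / u))"

text \<open>phi_p: p-th root of the least convex majorant of zeta^p on [0,1]
  (taken as the pointwise infimum of all convex majorants).\<close>
definition phi :: "real \<Rightarrow> real \<Rightarrow> real" where
  "phi p x = (Inf {f x | f. convex_on {0..1} f \<and> (\<forall>y\<in>{0..1}. zeta y powr p \<le> f y)}) powr (1 / p)"

end

theory Submission
  imports Defs
begin

text \<open>
  Fix \<open>s < t\<close> and let \<open>a, b\<close> be the left endpoints of the dyadic intervals of generation \<open>n\<close>
  containing \<open>s, t\<close>. Both \<open>x\<^sub>s\<^sub>t\<close> and the increment of \<open>\<Upsilon>\<^sub>n(x)\<close> over \<open>[s,t]\<close> have the form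
  \<open>P\<inverse> x\<^sub>a\<^sub>b Q\<close> with outer factors living on intervals of length at most \<open>2\<^sup>-\<^sup>n\<close>. In a step-2 group
  the quotient of two such products is \<open>F\<inverse> (M\<inverse> (E D\<inverse>) M) G\<close> with \<open>M = x\<^sub>a\<^sub>b\<close>, so the long piece
  \<open>M\<close> only enters through a conjugation and contributes linearly to the second level. If \<open>r\<close>
  bounds the norm of increments over intervals of length at most \<open>2\<^sup>-\<^sup>n\<close> and \<open>R \<ge> r\<close> bounds all
  increments, the quotient thus has first level \<open>O(r)\<close> and second level \<open>O(r R)\<close>. The ball-box
  estimate \<open>\<parallel>g\<parallel> \<le> (1 + 4d) (|g\<^sup>1| + |g\<^sup>2|\<^sup>1\<^sup>/\<^sup>2)\<close>, obtained from explicit commutator words,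
  turns this into \<open>d\<^sub>\<infinity>(x, \<Upsilon>\<^sub>n(x)) \<le> 8 (1 + 4d) (r R)\<^sup>1\<^sup>/\<^sup>2\<close>; with \<open>r = K \<phi>\<^sub>p(2\<^sup>-\<^sup>n)\<close> and \<open>R = K \<phi>\<^sub>p(1)\<close>,
  \<open>K\<close> the \<open>\<phi>\<^sub>p\<close>-Hoelder norm, this is the claim, because \<open>\<phi>\<^sub>p\<close> is positive and nondecreasing.
\<close>

section \<open>The step-2 group\<close>

lemma tens_nth [simp]: "tens a b $ i $ j = a $ i * b $ j"
  by (simp add: tens_def)

lemma tens_add_left [simp]: "tens (a + b) c = tens a c + tens b c"
  and tens_add_right [simp]: "tens a (b + c) = tens a b + tens a c"
  and tens_diff_left [simp]: "tens (a - b) c = tens a c - tens b c"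
  and tens_diff_right [simp]: "tens a (b - c) = tens a b - tens a c"
  and tens_minus_left [simp]: "tens (- a) c = - tens a c"
  and tens_minus_right [simp]: "tens a (- c) = - tens a c"
  and tens_zero_left [simp]: "tens 0 c = 0"
  and tens_zero_right [simp]: "tens a 0 = 0"
  and tens_scaleR_left [simp]: "tens (r *\<^sub>R a) c = r *\<^sub>R tens a c"
  and tens_scaleR_right [simp]: "tens a (r *\<^sub>R c) = r *\<^sub>R tens a c"
  by (simp_all add: vec_eq_iff algebra_simps)

lemma norm_tens: "norm (tens a b) = norm a * norm b"
proof -
  have rows: "tens a b $ i = (a $ i) *\<^sub>R b" for i
    by (simp add: vec_eq_iff)
  have "norm (tens a b) = L2_set (\<lambda>i. norm b * norm (a $ i)) UNIV"
    unfolding norm_vec_def[of "tens a b"] rows by (simp only: norm_scaleR real_norm_def mult.commute)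
  also have "\<dots> = norm a * norm b"
    by (simp add: L2_set_right_distrib norm_vec_def[of a] mult.commute)
  finally show ?thesis .
qed

lemma fst_gmul [simp]: "fst (gmul g h) = fst g + fst h"
  and snd_gmul [simp]: "snd (gmul g h) = snd g + tens (fst g) (fst h) + snd h"
  and fst_ginv [simp]: "fst (ginv g) = - fst g"
  and snd_ginv [simp]: "snd (ginv g) = - snd g + tens (fst g) (fst g)"
  and fst_dil [simp]: "fst (dil r g) = r *\<^sub>R fst g"
  and snd_dil [simp]: "snd (dil r g) = r\<^sup>2 *\<^sub>R snd g"
  by (simp_all add: gmul_def ginv_def dil_def gexp2_def algebra_simps power2_eq_square)

lemma gexp_eq: "gexp v = (v, (1/2) *\<^sub>R tens v v)"
  by (simp add: gexp_def gexp2_def)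

lemma gmul_assoc: "gmul (gmul a b) c = gmul a (gmul b c)"
  by (simp add: gmul_def algebra_simps)

lemma gmul_gid_left [simp]: "gmul gid g = g"
  and gmul_gid_right [simp]: "gmul g gid = g"
  and gmul_ginv_left [simp]: "gmul (ginv g) g = gid"
  and gmul_ginv_right [simp]: "gmul g (ginv g) = gid"
  and ginv_ginv [simp]: "ginv (ginv g) = g"
  by (simp_all add: gmul_def ginv_def gid_def)

lemma ginv_gmul: "ginv (gmul g h) = gmul (ginv h) (ginv g)"
  by (simp add: gmul_def ginv_def algebra_simps)

lemma Gset_iff: "g \<in> Gset \<longleftrightarrow> snd g + transpose (snd g) = tens (fst g) (fst g)"
  by (cases g) (simp add: Gset_def)

lemma Gset_gid: "gid \<in> Gset"
  and Gset_gmul: "g \<in> Gset \<Longrightarrow> h \<in> Gset \<Longrightarrow> gmul g h \<in> Gset"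
  and Gset_ginv: "g \<in> Gset \<Longrightarrow> ginv g \<in> Gset"
  and Gset_dil: "g \<in> Gset \<Longrightarrow> dil r g \<in> Gset"
  unfolding Gset_iff
  by (simp_all add: gid_def vec_eq_iff transpose_def algebra_simps power2_eq_square)
     (metis distrib_left)

lemma norm_fst_gmul_le: "norm (fst (gmul g h)) \<le> norm (fst g) + norm (fst h)"
  by (simp add: norm_triangle_ineq)

lemma norm_snd_gmul_le:
  "norm (snd (gmul g h)) \<le> norm (snd g) + norm (fst g) * norm (fst h) + norm (snd h)"
proof -
  have "norm (snd g + tens (fst g) (fst h) + snd h)
      \<le> norm (snd g) + norm (tens (fst g) (fst h)) + norm (snd h)"
    using norm_triangle_ineq[of "snd g + tens (fst g) (fst h)" "snd h"]
      norm_triangle_ineq[of "snd g" "tens (fst g) (fst h)"] by linarith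
  then show ?thesis
    by (simp add: norm_tens)
qed

lemma norm_snd_ginv_le: "norm (snd (ginv g)) \<le> norm (snd g) + (norm (fst g))\<^sup>2"
  using norm_triangle_ineq[of "- snd g" "tens (fst g) (fst g)"]
  by (simp add: norm_tens power2_eq_square)

lemma gconj_eq:
  "gmul (ginv m) (gmul y m) = (fst y, snd y + tens (fst y) (fst m) - tens (fst m) (fst y))"
  by (simp add: gmul_def ginv_def vec_eq_iff algebra_simps)

lemma norm_snd_gconj_le:
  "norm (snd (gmul (ginv m) (gmul y m))) \<le> norm (snd y) + 2 * norm (fst y) * norm (fst m)"
proof -
  have "norm (snd y + tens (fst y) (fst m) - tens (fst m) (fst y))
      \<le> norm (snd y) + norm (tens (fst y) (fst m)) + norm (tens (fst m) (fst y))"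
    by (meson add_mono norm_triangle_ineq norm_triangle_ineq4 order_trans order_refl)
  then show ?thesis
    by (simp add: gconj_eq norm_tens algebra_simps)
qed

section \<open>Words and the Carnot-Caratheodory norm\<close>

definition word_prod :: "(real^'d) list \<Rightarrow> ('d::finite) grp" where
  "word_prod xs = foldr (\<lambda>v h. gmul (gexp v) h) xs gid"

definition word_length :: "(real^('d::finite)) list \<Rightarrow> real" where
  "word_length xs = sum_list (map norm xs)"

lemma word_prod_Nil [simp]: "word_prod [] = gid"
  and word_prod_Cons [simp]: "word_prod (v # xs) = gmul (gexp v) (word_prod xs)"
  and word_length_Nil [simp]: "word_length [] = 0"
  and word_length_Cons [simp]: "word_length (v # xs) = norm v + word_length xs"
  by (simp_all add: word_prod_def word_length_def)

lemma word_prod_append: "word_prod (xs @ ys) = gmul (word_prod xs) (word_prod ys)"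
  by (induction xs) (simp_all add: gmul_assoc)

lemma word_length_append: "word_length (xs @ ys) = word_length xs + word_length ys"
  by (simp add: word_length_def)

lemma word_length_nonneg: "0 \<le> word_length xs"
  by (induction xs) auto

lemma word_prod_bounds:
  "norm (fst (word_prod xs)) \<le> word_length xs \<and> norm (snd (word_prod xs)) \<le> (word_length xs)\<^sup>2 / 2"
proof (induction xs)
  case Nil
  then show ?case by (simp add: gid_def)
next
  case (Cons v xs)
  let ?w = "word_prod xs" and ?L = "word_length xs"
  have "norm (snd (word_prod (v # xs))) \<le> (norm v)\<^sup>2 / 2 + norm v * norm (fst ?w) + norm (snd ?w)"
    using norm_snd_gmul_le[of "gexp v" ?w] by (simp add: gexp_eq norm_tens power2_eq_square)
  also have "\<dots> \<le> (norm v)\<^sup>2 / 2 + norm v * ?L + ?L\<^sup>2 / 2"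
    using Cons by (intro add_mono mult_left_mono) auto
  also have "\<dots> = (word_length (v # xs))\<^sup>2 / 2"
    by (simp add: power2_eq_square algebra_simps)
  finally show ?case
    using Cons norm_fst_gmul_le[of "gexp v" ?w] by (simp add: gexp_eq)
qed

lemma ccnorm_word_prod_le: "ccnorm (word_prod xs) \<le> word_length xs"
  unfolding ccnorm_def word_prod_def word_length_def
  by (rule cInf_lower) (auto simp: bdd_below_def intro!: exI[of _ 0] sum_list_nonneg)

lemma ccnorm_ge_if_word:
  assumes "word_prod ys = g"
  shows "norm (fst g) \<le> ccnorm g" "norm (snd g) \<le> (ccnorm g)\<^sup>2 / 2" "0 \<le> ccnorm g"
proof -
  have lengths: "{sum_list (map norm xs) | xs. foldr (\<lambda>v h. gmul (gexp v) h) xs gid = g}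
      = word_length ` {xs. word_prod xs = g}"
    by (auto simp: word_prod_def word_length_def)
  have ne: "{xs. word_prod xs = g} \<noteq> {}"
    using assms by blast
  show "norm (fst g) \<le> ccnorm g" "0 \<le> ccnorm g"
    unfolding ccnorm_def lengths
    using word_prod_bounds by (auto intro!: cINF_greatest[OF ne] simp: word_length_nonneg)
  have "sqrt (2 * norm (snd g)) \<le> ccnorm g"
    unfolding ccnorm_def lengths
  proof (rule cINF_greatest[OF ne])
    fix xs assume "xs \<in> {xs. word_prod xs = g}"
    then have "2 * norm (snd g) \<le> (word_length xs)\<^sup>2"
      using word_prod_bounds[of xs] by auto
    then show "sqrt (2 * norm (snd g)) \<le> word_length xs"
      using word_length_nonneg[of xs] by (simp add: real_le_lsqrt)
  qed
  then show "norm (snd g) \<le> (ccnorm g)\<^sup>2 / 2"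
    using sqrt_le_D by fastforce
qed

lemma word_prod_commutator: "word_prod [a, b, -a, -b] = (0, tens a b - tens b a)"
  by (simp add: gexp_eq gmul_def gid_def vec_eq_iff algebra_simps)

text \<open>Rescaling \<open>a\<close> and \<open>b\<close> inversely leaves \<open>tens a b\<close> unchanged and balances their
  norms at \<open>sqrt (norm a * norm b)\<close>.\<close>
lemma commutator_word_exists:
  "\<exists>xs. word_prod xs = (0, tens a b - tens b a) \<and> word_length xs \<le> 4 * sqrt (norm a * norm b)"
proof (cases "a = 0 \<or> b = 0")
  case True
  then show ?thesis
    by (intro exI[of _ "[]"]) (auto simp: gid_def)
next
  case False
  define c where "c = sqrt (norm b / norm a)"
  have c: "0 < c" "c * norm a = sqrt (norm a * norm b)" "norm b / c = sqrt (norm a * norm b)"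
    using False by (auto simp: c_def real_sqrt_divide field_simps real_sqrt_mult)
  have "tens (c *\<^sub>R a) ((1 / c) *\<^sub>R b) = tens a b" "tens ((1 / c) *\<^sub>R b) (c *\<^sub>R a) = tens b a"
    using c by simp_all
  then show ?thesis
    using c word_prod_commutator[of "c *\<^sub>R a" "(1 / c) *\<^sub>R b"]
    by (intro exI[of _ "[c *\<^sub>R a, (1 / c) *\<^sub>R b, - (c *\<^sub>R a), - ((1 / c) *\<^sub>R b)]"]) simp
qed

lemma central_word_sum:
  assumes "finite S" and "\<And>i. i \<in> S \<Longrightarrow> \<exists>xs. word_prod xs = (0, f i) \<and> word_length xs \<le> L"
  shows "\<exists>xs. word_prod xs = (0, \<Sum>i\<in>S. f i) \<and> word_length xs \<le> real (card S) * L"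
  using assms
proof (induction S rule: finite_induct)
  case empty
  show ?case by (intro exI[of _ "[]"]) (simp add: gid_def)
next
  case (insert i S)
  obtain xs where "word_prod xs = (0, f i)" "word_length xs \<le> L"
    using insert.prems by blast
  moreover obtain ys where "word_prod ys = (0, \<Sum>i\<in>S. f i)" "word_length ys \<le> real (card S) * L"
    using insert.IH insert.prems by blast
  ultimately show ?case
    using insert.hyps
    by (intro exI[of _ "xs @ ys"]) (simp add: word_prod_append word_length_append gmul_def algebra_simps)
qed

lemma antisym_eq_sum_commutators:
  fixes A :: "real^'d^('d::finite)"
  assumes "transpose A = - A"
  shows "A = (\<Sum>i\<in>UNIV. tens (axis i 1) ((1/2) *\<^sub>R (A $ i)) - tens ((1/2) *\<^sub>R (A $ i)) (axis i 1))"
    (is "A = ?S")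
proof -
  have axis_sum: "(\<Sum>i\<in>UNIV. (axis i 1 :: real^'d) $ k * c i) = c k"
    "(\<Sum>i\<in>UNIV. c i * (axis i 1 :: real^'d) $ k) = c k" for c k
    by (simp_all add: axis_def if_distrib[of "\<lambda>x. x * _"] if_distrib[of "\<lambda>x. _ * x"] cong: if_cong)
  have "?S $ k $ j = (\<Sum>i\<in>UNIV. (axis i 1 :: real^'d) $ k * A $ i $ j) / 2
      - (\<Sum>i\<in>UNIV. A $ i $ k * (axis i 1 :: real^'d) $ j) / 2" for k j
    by (simp add: sum_subtractf sum_divide_distrib)
  then have S_nth: "?S $ k $ j = A $ k $ j / 2 - A $ j $ k / 2" for k j
    by (simp only: axis_sum)
  have anti: "A $ j $ k = - A $ k $ j" for j k
    using arg_cong[OF assms, of "\<lambda>M. M $ k $ j"] by (simp add: transpose_def)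
  show ?thesis
  proof (simp only: vec_eq_iff, intro allI)
    show "A $ k $ j = ?S $ k $ j" for k j
      using S_nth[of k j] anti[of j k] by linarith
  qed
qed

lemma antisym_word_exists:
  fixes A :: "real^'d^('d::finite)"
  assumes "transpose A = - A"
  shows "\<exists>xs. word_prod xs = (0, A) \<and> word_length xs \<le> CARD('d) * (4 * sqrt (norm A))"
proof -
  have "\<exists>xs. word_prod xs = (0, tens (axis i 1) ((1/2) *\<^sub>R (A $ i)) - tens ((1/2) *\<^sub>R (A $ i)) (axis i 1))
      \<and> word_length xs \<le> 4 * sqrt (norm A)" for i
  proof -
    have "norm (A $ i) / 2 \<le> norm A"
      using Finite_Cartesian_Product.norm_nth_le[where x=A and i=i] norm_ge_zero[of "A $ i"] by linarith
    then have "4 * sqrt (norm (axis i (1::real)) * norm ((1/2) *\<^sub>R (A $ i))) \<le> 4 * sqrt (norm A)"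
      by simp
    then show ?thesis
      using commutator_word_exists[of "axis i 1" "(1/2) *\<^sub>R (A $ i)"] by (meson order_trans)
  qed
  then have "\<exists>xs. word_prod xs
        = (0, \<Sum>i\<in>UNIV. tens (axis i 1) ((1/2) *\<^sub>R (A $ i)) - tens ((1/2) *\<^sub>R (A $ i)) (axis i 1))
      \<and> word_length xs \<le> CARD('d) * (4 * sqrt (norm A))"
    by (intro central_word_sum) auto
  then show ?thesis
    using antisym_eq_sum_commutators[OF assms] by metis
qed

lemma Gset_word_exists:
  fixes g :: "('d::finite) grp"
  assumes "g \<in> Gset"
  shows "\<exists>xs. word_prod xs = g \<and> word_length xs \<le> (1 + 4 * CARD('d)) * (norm (fst g) + sqrt (norm (snd g)))"
proof -
  define A where "A = snd g - (1/2) *\<^sub>R tens (fst g) (fst g)"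
  have "snd g $ i $ j + snd g $ j $ i = fst g $ i * fst g $ j" for i j
    using arg_cong[OF assms[unfolded Gset_iff], of "\<lambda>M. M $ i $ j"] by (simp add: transpose_def)
  then have "transpose A = - A"
    by (simp add: A_def vec_eq_iff transpose_def algebra_simps)
  then obtain xs where xs: "word_prod xs = (0, A)" "word_length xs \<le> CARD('d) * (4 * sqrt (norm A))"
    using antisym_word_exists by blast
  have "norm A \<le> norm (snd g) + (norm (fst g))\<^sup>2 / 2"
    using norm_triangle_ineq4[of "snd g" "(1/2) *\<^sub>R tens (fst g) (fst g)"]
    by (simp add: A_def norm_tens power2_eq_square)
  also have "\<dots> \<le> (norm (fst g) + sqrt (norm (snd g)))\<^sup>2"
    unfolding power2_sum by simp
  finally have "sqrt (norm A) \<le> norm (fst g) + sqrt (norm (snd g))"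
    by (simp add: real_le_lsqrt)
  then have "CARD('d) * (4 * sqrt (norm A)) \<le> CARD('d) * (4 * (norm (fst g) + sqrt (norm (snd g))))"
    by (intro mult_left_mono) auto
  then have "word_length (fst g # xs) \<le> norm (fst g) + CARD('d) * (4 * (norm (fst g) + sqrt (norm (snd g))))"
    using xs(2) unfolding word_length_Cons by linarith
  also have "\<dots> \<le> (1 + 4 * CARD('d)) * (norm (fst g) + sqrt (norm (snd g)))"
    by (simp add: algebra_simps)
  finally show ?thesis
    using xs(1) by (intro exI[of _ "fst g # xs"]) (simp add: gexp_eq gmul_def A_def)
qed

lemma ccnorm_le:
  fixes g :: "('d::finite) grp"
  assumes "g \<in> Gset"
  shows "ccnorm g \<le> (1 + 4 * CARD('d)) * (norm (fst g) + sqrt (norm (snd g)))"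
  using Gset_word_exists[OF assms] ccnorm_word_prod_le order_trans by blast

lemma ccnorm_ge:
  assumes "g \<in> Gset"
  shows "norm (fst g) \<le> ccnorm g" "norm (snd g) \<le> (ccnorm g)\<^sup>2 / 2" "0 \<le> ccnorm g"
  using Gset_word_exists[OF assms] ccnorm_ge_if_word by blast+

section \<open>Perturbation of products sharing a middle factor\<close>

definition gbounded :: "real \<Rightarrow> real \<Rightarrow> ('d::finite) grp \<Rightarrow> bool" where
  "gbounded a b g \<longleftrightarrow> norm (fst g) \<le> a \<and> norm (snd g) \<le> b"

lemma gbounded_mono: "gbounded a b g \<Longrightarrow> a \<le> a' \<Longrightarrow> b \<le> b' \<Longrightarrow> gbounded a' b' g"
  by (auto simp: gbounded_def)

lemma gbounded_gmul:
  assumes "gbounded a b g" "gbounded a' b' h"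
  shows "gbounded (a + a') (b + a * a' + b') (gmul g h)"
proof -
  have "norm (fst g) * norm (fst h) \<le> a * a'"
    using assms by (intro mult_mono) (auto simp: gbounded_def intro: order_trans[OF norm_ge_zero])
  then show ?thesis
    using assms norm_fst_gmul_le[of g h] norm_snd_gmul_le[of g h] by (auto simp: gbounded_def)
qed

lemma gbounded_ginv:
  assumes "gbounded a b g"
  shows "gbounded a (b + a\<^sup>2) (ginv g)"
proof -
  have "(norm (fst g))\<^sup>2 \<le> a\<^sup>2"
    using assms by (intro power_mono) (auto simp: gbounded_def)
  then show ?thesis
    using assms norm_snd_ginv_le[of g] by (auto simp: gbounded_def)
qed

lemma gbounded_gconj:
  assumes "gbounded a b y" "norm (fst m) \<le> R"
  shows "gbounded a (b + 2 * a * R) (gmul (ginv m) (gmul y m))"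
proof -
  have "norm (fst y) * norm (fst m) \<le> a * R"
    using assms by (intro mult_mono) (auto simp: gbounded_def intro: order_trans[OF norm_ge_zero])
  then show ?thesis
    using assms norm_snd_gconj_le[of m y] by (auto simp: gbounded_def gconj_eq)
qed

lemma gbounded_dil:
  assumes "gbounded r (r\<^sup>2) g" "0 \<le> \<tau>" "\<tau> \<le> 1"
  shows "gbounded r (r\<^sup>2) (dil \<tau> g)"
proof -
  have "\<tau> * norm (fst g) \<le> 1 * r" "\<tau>\<^sup>2 * norm (snd g) \<le> 1 * r\<^sup>2"
    using assms by (intro mult_mono; auto simp: gbounded_def power_le_one)+
  then show ?thesis
    using assms(2) by (simp add: gbounded_def)
qed

lemma gbounded_if_ccnorm_le:
  assumes "g \<in> Gset" "ccnorm g \<le> r"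
  shows "gbounded r (r\<^sup>2) g"
proof -
  have "(ccnorm g)\<^sup>2 \<le> r\<^sup>2"
    using ccnorm_ge(3)[OF assms(1)] assms(2) by (intro power_mono) auto
  then show ?thesis
    using ccnorm_ge[OF assms(1)] assms(2) zero_le_power2[of r] unfolding gbounded_def by linarith
qed

lemma ccnorm_le_gbounded:
  fixes g :: "('d::finite) grp"
  assumes "g \<in> Gset" "gbounded a b g"
  shows "ccnorm g \<le> (1 + 4 * CARD('d)) * (a + sqrt b)"
proof -
  have "norm (fst g) + sqrt (norm (snd g)) \<le> a + sqrt b"
    using assms(2) by (auto simp: gbounded_def intro: add_mono)
  then show ?thesis
    using ccnorm_le[OF assms(1)] by (meson mult_left_mono of_nat_0_le_iff order_trans)
qed

text \<open>The quotient equals \<open>F\<inverse> (M\<inverse> (E D\<inverse>) M) G\<close>, so \<open>M\<close> enters only through a conjugation.\<close>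
lemma gbounded_perturbation:
  assumes E: "gbounded r (r\<^sup>2) E" and F: "gbounded r (r\<^sup>2) F"
    and D: "gbounded r (r\<^sup>2) D" and G: "gbounded r (r\<^sup>2) G" and M: "norm (fst M) \<le> R"
  shows "gbounded (4 * r) (12 * r\<^sup>2 + 4 * r * R)
    (gmul (ginv (gmul (gmul (ginv E) M) F)) (gmul (gmul (ginv D) M) G))"
proof -
  have "gbounded (2 * r) (4 * r\<^sup>2) (gmul E (ginv D))"
    using gbounded_gmul[OF E gbounded_ginv[OF D]] by (simp add: power2_eq_square algebra_simps)
  from gbounded_gconj[OF this M]
  have "gbounded (2 * r) (4 * r\<^sup>2 + 4 * r * R) (gmul (ginv M) (gmul (gmul E (ginv D)) M))"
    by (simp add: algebra_simps)
  from gbounded_gmul[OF gbounded_ginv[OF F] this]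
  have "gbounded (3 * r) (8 * r\<^sup>2 + 4 * r * R)
      (gmul (ginv F) (gmul (ginv M) (gmul (gmul E (ginv D)) M)))"
    by (simp add: power2_eq_square algebra_simps)
  from gbounded_gmul[OF this G]
  have "gbounded (4 * r) (12 * r\<^sup>2 + 4 * r * R)
      (gmul (gmul (ginv F) (gmul (ginv M) (gmul (gmul E (ginv D)) M))) G)"
    by (simp add: power2_eq_square algebra_simps)
  then show ?thesis
    by (simp add: ginv_gmul gmul_assoc)
qed

lemma ccnorm_perturbation_le:
  fixes E :: "('d::finite) grp"
  assumes "E \<in> Gset" "F \<in> Gset" "D \<in> Gset" "G \<in> Gset" "M \<in> Gset"
    and bounds: "gbounded r (r\<^sup>2) E" "gbounded r (r\<^sup>2) F" "gbounded r (r\<^sup>2) D" "gbounded r (r\<^sup>2) G"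
      "norm (fst M) \<le> R"
    and r: "0 \<le> r" "r \<le> R"
  shows "ccnorm (gmul (ginv (gmul (gmul (ginv E) M) F)) (gmul (gmul (ginv D) M) G))
    \<le> 8 * (1 + 4 * CARD('d)) * sqrt (r * R)"
proof -
  let ?s = "sqrt (r * R)"
  have "r * r \<le> r * R" "r * R \<le> R * R"
    using r by (auto intro: mult_mono)
  then have "r \<le> ?s" and "12 * r\<^sup>2 + 4 * r * R \<le> (4 * ?s)\<^sup>2"
    using r(1) by (auto simp: real_le_rsqrt power2_eq_square power_mult_distrib)
  then have "gbounded (4 * ?s) ((4 * ?s)\<^sup>2)
      (gmul (ginv (gmul (gmul (ginv E) M) F)) (gmul (gmul (ginv D) M) G))"
    by (intro gbounded_mono[OF gbounded_perturbation[OF bounds]]) auto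
  moreover have "gmul (ginv (gmul (gmul (ginv E) M) F)) (gmul (gmul (ginv D) M) G) \<in> Gset"
    using assms(1-5) by (intro Gset_gmul Gset_ginv)
  ultimately have "ccnorm (gmul (ginv (gmul (gmul (ginv E) M) F)) (gmul (gmul (ginv D) M) G))
      \<le> (1 + 4 * CARD('d)) * (4 * ?s + sqrt ((4 * ?s)\<^sup>2))"
    by (rule ccnorm_le_gbounded[rotated])
  also have "\<dots> = 8 * (1 + 4 * CARD('d)) * ?s"
    using r by (simp only: real_sqrt_abs) (simp add: algebra_simps)
  finally show ?thesis .
qed

section \<open>The modulus \<open>\<phi>\<^sub>p\<close>\<close>

definition zeta_integrand :: "real \<Rightarrow> real" where
  "zeta_integrand u = sqrt (ln (1 + 1 / u\<^sup>2) / u)"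

lemma zeta_eq_integral: "zeta x = 1 / (2 * sqrt 2) * integral {0..x} zeta_integrand"
  by (simp add: zeta_def zeta_integrand_def[abs_def])

lemma zeta_integrand_nonneg: "0 \<le> u \<Longrightarrow> 0 \<le> zeta_integrand u"
  by (simp add: zeta_integrand_def)

lemma zeta_integrand_antimono:
  assumes "0 < u" "u \<le> v"
  shows "zeta_integrand v \<le> zeta_integrand u"
proof -
  have "1 / v\<^sup>2 \<le> 1 / u\<^sup>2"
    using assms by (simp add: field_simps power_mono)
  then have "ln (1 + 1 / v\<^sup>2) \<le> ln (1 + 1 / u\<^sup>2)"
    by (subst ln_le_cancel_iff) (auto intro: add_pos_nonneg)
  then have "ln (1 + 1 / v\<^sup>2) / u \<le> ln (1 + 1 / u\<^sup>2) / u"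
    using assms by (simp add: divide_right_mono)
  moreover have "ln (1 + 1 / v\<^sup>2) / v \<le> ln (1 + 1 / v\<^sup>2) / u"
    using assms by (intro divide_left_mono) auto
  ultimately show ?thesis
    by (simp add: zeta_integrand_def)
qed

lemma ln_one_plus_le_powr_quarter:
  assumes "0 \<le> (z::real)"
  shows "ln (1 + z) \<le> 4 * z powr (1/4)"
proof -
  define w where "w = z powr (1/4)"
  have "0 \<le> w"
    by (simp add: w_def)
  have "w ^ 4 = z"
    using assms by (cases "z = 0") (simp_all add: w_def powr_realpow[symmetric] powr_powr)
  then have "1 + z \<le> (1 + w) ^ 4"
    using \<open>0 \<le> w\<close> by (auto simp: power_def algebra_simps numeral_eq_Suc)
  then have "ln (1 + z) \<le> ln ((1 + w) ^ 4)"
    using assms by (subst ln_le_cancel_iff) auto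
  also have "\<dots> = 4 * ln (1 + w)"
    using \<open>0 \<le> w\<close> by (simp add: ln_realpow)
  also have "\<dots> \<le> 4 * w"
    using ln_add_one_self_le_self[OF \<open>0 \<le> w\<close>] by simp
  finally show ?thesis
    by (simp add: w_def)
qed

lemma zeta_integrand_le:
  assumes "0 < u"
  shows "zeta_integrand u \<le> 2 * u powr (-3/4)"
proof -
  have "u\<^sup>2 = u powr 2"
    using assms by (simp add: powr_numeral)
  then have "1 / u\<^sup>2 = u powr (-2)"
    by (simp add: powr_minus divide_inverse)
  then have "(1 / u\<^sup>2) powr (1/4) = u powr (-1/2)"
    using assms by (simp add: powr_powr)
  then have "ln (1 + 1 / u\<^sup>2) \<le> 4 * u powr (-1/2)"
    using ln_one_plus_le_powr_quarter[of "1 / u\<^sup>2"] by simp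
  then have "ln (1 + 1 / u\<^sup>2) / u \<le> 4 * u powr (-1/2) / u"
    using assms by (simp add: divide_right_mono)
  also have "\<dots> = (2 * u powr (-3/4))\<^sup>2"
  proof -
    have "u powr (-1) = inverse u"
      using assms by (simp add: powr_minus)
    then have "u powr (-1/2) / u = u powr (-1/2) * u powr (-1)"
      by (simp only: divide_inverse)
    also have "\<dots> = u powr (-1/2 + -1)"
      by (rule powr_add[symmetric])
    also have "\<dots> = u powr (-3/4 + -3/4)"
      by simp
    also have "\<dots> = u powr (-3/4) * u powr (-3/4)"
      by (rule powr_add)
    also have "\<dots> = (u powr (-3/4))\<^sup>2"
      by (simp add: power2_eq_square)
    finally show ?thesis
      by (simp add: power_mult_distrib)
  qed
  finally show ?thesis
    unfolding zeta_integrand_def by (intro real_le_lsqrt) auto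
qed

lemma zeta_integrand_integrable:
  assumes "0 \<le> x"
  shows "zeta_integrand integrable_on {0..x}"
proof (rule measurable_bounded_by_integrable_imp_integrable_real)
  have "zeta_integrand \<in> borel_measurable borel"
    unfolding zeta_integrand_def by measurable
  from measurable_comp[OF id_borel_measurable_lebesgue_on this]
  show "zeta_integrand \<in> borel_measurable (lebesgue_on {0..x})"
    by (simp add: comp_def)
  show "(\<lambda>u. 2 * u powr (-3/4)) integrable_on {0..x}"
    using integrable_on_cmult_left[OF integrable_on_powr_from_0[of "-3/4" x], of 2] assms by simp
  show "\<bar>zeta_integrand u\<bar> \<le> 2 * u powr (-3/4)" if "u \<in> {0..x}" for u
    using that zeta_integrand_le zeta_integrand_nonneg by (cases "u = 0") (auto simp: zeta_integrand_def)
qed auto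

lemma zeta_mono:
  assumes "0 \<le> y" "y \<le> y'"
  shows "zeta y \<le> zeta y'"
proof -
  have "integral {0..y} zeta_integrand \<le> integral {0..y'} zeta_integrand"
    using assms by (intro integral_subset_le zeta_integrand_integrable) (auto intro: zeta_integrand_nonneg)
  then show ?thesis
    unfolding zeta_eq_integral by (simp add: divide_right_mono)
qed

lemma zeta_nonneg: "0 \<le> y \<Longrightarrow> 0 \<le> zeta y"
  using zeta_mono[of 0 y] by (simp add: zeta_eq_integral)

text \<open>The integrand dominates the linear function through the origin and \<open>(x, zeta_integrand x)\<close>;
  going through the origin avoids the junk value \<open>zeta_integrand 0 = 0\<close>.\<close>
lemma zeta_pos:
  assumes "0 < x"
  shows "0 < zeta x"
proof -
  define c where "c = zeta_integrand x / x"
  have "0 < c"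
    using assms by (simp add: c_def zeta_integrand_def ln_gt_zero)
  have "((\<lambda>u. c * u powr 1) has_integral c * (x powr 2 / 2)) {0..x}"
    using has_integral_mult_right[OF has_integral_powr_from_0[of 1 x]] assms by simp
  moreover have "(zeta_integrand has_integral integral {0..x} zeta_integrand) {0..x}"
    using zeta_integrand_integrable assms by (simp add: integrable_integral)
  moreover have "c * u powr 1 \<le> zeta_integrand u" if "u \<in> {0..x}" for u
  proof (cases "u = 0")
    case False
    then have "c * u \<le> zeta_integrand x"
      using that assms \<open>0 < c\<close> by (simp add: c_def field_simps zeta_integrand_nonneg)
    also have "\<dots> \<le> zeta_integrand u"
      using that False by (intro zeta_integrand_antimono) auto
    finally show ?thesis
      using that by simp
  qed (simp add: zeta_integrand_def)
  ultimately have "c * (x powr 2 / 2) \<le> integral {0..x} zeta_integrand"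
    by (rule has_integral_le)
  moreover have "0 < c * (x powr 2 / 2)"
    using \<open>0 < c\<close> assms by simp
  ultimately show ?thesis
    unfolding zeta_eq_integral by simp
qed

definition is_zeta_majorant :: "real \<Rightarrow> (real \<Rightarrow> real) \<Rightarrow> bool" where
  "is_zeta_majorant p f \<longleftrightarrow> convex_on {0..1} f \<and> (\<forall>y\<in>{0..1}. zeta y powr p \<le> f y)"

definition zeta_majorant :: "real \<Rightarrow> real \<Rightarrow> real" where
  "zeta_majorant p x = Inf {f x | f. is_zeta_majorant p f}"

lemma phi_eq_zeta_majorant: "phi p x = zeta_majorant p x powr (1/p)"
  by (simp add: phi_def zeta_majorant_def is_zeta_majorant_def)

lemma is_zeta_majorant_const: "0 \<le> p \<Longrightarrow> is_zeta_majorant p (\<lambda>_. zeta 1 powr p)"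
  unfolding is_zeta_majorant_def
  by (auto intro!: powr_mono2 zeta_nonneg zeta_mono simp: convex_on_const)

lemma zeta_majorant_bdd_below:
  "x \<in> {0..1} \<Longrightarrow> bdd_below {f x | f. is_zeta_majorant p f}"
  by (auto simp: bdd_below_def is_zeta_majorant_def intro!: exI[of _ "zeta x powr p"])

lemma zeta_majorant_ge: "0 \<le> p \<Longrightarrow> x \<in> {0..1} \<Longrightarrow> zeta x powr p \<le> zeta_majorant p x"
  unfolding zeta_majorant_def
  by (rule cInf_greatest) (use is_zeta_majorant_const in \<open>auto simp: is_zeta_majorant_def\<close>)

text \<open>Applied to a convex majorant of \<open>zeta\<^sup>p\<close> this yields one that is constant left of \<open>h\<close>,
  which is why the least convex majorant is nondecreasing.\<close>
lemma convex_on_clip: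
  fixes f :: "real \<Rightarrow> real"
  assumes f: "convex_on {a..b} f" and h: "h \<in> {a..b}"
  shows "convex_on {a..b} (\<lambda>y. max (f h) (f (max y h)))"
proof (rule convex_onI)
  fix t x y :: real
  assume t: "0 < t" "t < 1" and x: "x \<in> {a..b}" and y: "y \<in> {a..b}"
  define x' where "x' = max x h"
  define y' where "y' = max y h"
  define w where "w = (1 - t) * x' + t * y'"
  define z where "z = max ((1 - t) * x + t * y) h"
  have x': "x' \<in> {a..b}" "h \<le> x'" "x \<le> x'" and y': "y' \<in> {a..b}" "h \<le> y'" "y \<le> y'"
    using x y h by (auto simp: x'_def y'_def)
  have "(1 - t) * h + t * h \<le> w" "w \<le> (1 - t) * b + t * b"
    using x' y' t unfolding w_def by (intro add_mono mult_left_mono; simp)+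
  then have w: "h \<le> w" "w \<in> {a..b}"
    using h by (auto simp: algebra_simps)
  have "(1 - t) * x + t * y \<le> w"
    using x' y' t unfolding w_def by (intro add_mono mult_left_mono) auto
  then have "z \<in> {h..w}"
    using w by (auto simp: z_def)
  moreover have "{h..w} \<subseteq> {a..b}"
    using h w by auto
  ultimately have fz: "f z \<le> max (f h) (f w)"
    by (intro convex_on_le_max[OF convex_on_subset[OF f]]) auto
  let ?R = "(1 - t) * max (f h) (f x') + t * max (f h) (f y')"
  have "(1 - t) * f h + t * f h \<le> ?R" "(1 - t) * f x' + t * f y' \<le> ?R"
    using t by (intro add_mono mult_left_mono; simp)+
  moreover have "f w \<le> (1 - t) * f x' + t * f y'"
    using convex_onD[OF f, of t x' y'] t x' y' by (simp add: w_def)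
  ultimately have "f h \<le> ?R" "f w \<le> ?R"
    by (simp_all add: algebra_simps)
  then have "max (f h) (f z) \<le> ?R"
    using fz by (meson max.bounded_iff order_trans)
  then show "max (f h) (f (max ((1 - t) *\<^sub>R x + t *\<^sub>R y) h))
      \<le> (1 - t) * max (f h) (f (max x h)) + t * max (f h) (f (max y h))"
    by (simp add: z_def x'_def y'_def)
qed (rule convex_real_interval)

lemma zeta_majorant_mono:
  assumes "0 \<le> p" "0 \<le> u" "u \<le> h" "h \<le> 1"
  shows "zeta_majorant p u \<le> zeta_majorant p h"
  unfolding zeta_majorant_def[of p h]
proof (rule cInf_greatest)
  show "{f h | f. is_zeta_majorant p f} \<noteq> {}"
    using is_zeta_majorant_const[OF assms(1)] by blast
  fix v
  assume "v \<in> {f h | f. is_zeta_majorant p f}"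
  then obtain f where f: "is_zeta_majorant p f" and v: "v = f h"
    by blast
  define g where "g = (\<lambda>y. max (f h) (f (max y h)))"
  have "zeta y powr p \<le> g y" if "y \<in> {0..1}" for y
  proof (cases "y \<le> h")
    case True
    then have "zeta y powr p \<le> zeta h powr p"
      using that assms by (auto intro!: powr_mono2 zeta_mono zeta_nonneg)
    also have "\<dots> \<le> f h"
      using f assms by (auto simp: is_zeta_majorant_def)
    finally show ?thesis
      by (simp add: g_def)
  next
    case False
    have "zeta y powr p \<le> f y"
      using f that by (auto simp: is_zeta_majorant_def)
    with False show ?thesis
      by (simp add: g_def le_max_iff_disj)
  qed
  moreover have "convex_on {0..1} g"
    unfolding g_def using f assms by (intro convex_on_clip) (auto simp: is_zeta_majorant_def)
  ultimately have "zeta_majorant p u \<le> g u"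
    unfolding zeta_majorant_def
    by (intro cInf_lower zeta_majorant_bdd_below) (use assms in \<open>auto simp: is_zeta_majorant_def\<close>)
  also have "g u = v"
    using assms v by (simp add: g_def max_def)
  finally show "zeta_majorant p u \<le> v" .
qed

lemma zeta_majorant_nonneg: "0 \<le> p \<Longrightarrow> x \<in> {0..1} \<Longrightarrow> 0 \<le> zeta_majorant p x"
  using zeta_majorant_ge[of p x] by (meson order_trans powr_ge_zero)

lemma phi_pos:
  assumes "0 < p" "0 < x" "x \<le> 1"
  shows "0 < phi p x"
proof -
  have "0 < zeta x powr p"
    using zeta_pos[OF assms(2)] by simp
  also have "\<dots> \<le> zeta_majorant p x"
    using zeta_majorant_ge[of p x] assms by auto
  finally show ?thesis
    unfolding phi_eq_zeta_majorant by simp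
qed

lemma phi_mono:
  assumes "0 < p" "0 \<le> u" "u \<le> h" "h \<le> 1"
  shows "phi p u \<le> phi p h"
  unfolding phi_eq_zeta_majorant using assms
  by (intro powr_mono2 zeta_majorant_mono zeta_majorant_nonneg) auto

section \<open>Dyadic approximation\<close>

definition dyadic_index :: "nat \<Rightarrow> real \<Rightarrow> nat" where
  "dyadic_index n t = min (nat \<lfloor>2 ^ n * t\<rfloor>) (2 ^ n - 1)"

definition dyadic_left :: "nat \<Rightarrow> real \<Rightarrow> real" where
  "dyadic_left n t = real (dyadic_index n t) / 2 ^ n"

definition dyadic_right :: "nat \<Rightarrow> real \<Rightarrow> real" where
  "dyadic_right n t = (real (dyadic_index n t) + 1) / 2 ^ n"

lemma upsilon_eq:
  "upsilon n x t = gmul (x (dyadic_left n t))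
     (dil (2 ^ n * (t - dyadic_left n t)) (incr x (dyadic_left n t) (dyadic_right n t)))"
  by (simp add: upsilon_def dyadic_left_def dyadic_right_def dyadic_index_def Let_def)

lemma dyadic_interval:
  assumes t: "0 \<le> t" "t \<le> 1"
  shows "0 \<le> dyadic_left n t" "dyadic_left n t \<le> t" "t \<le> dyadic_right n t" "dyadic_right n t \<le> 1"
    and "dyadic_right n t - dyadic_left n t = 2 powr - real n"
    and "0 \<le> 2 ^ n * (t - dyadic_left n t)" "2 ^ n * (t - dyadic_left n t) \<le> 1"
proof -
  define N :: nat where "N = 2 ^ n"
  define k where "k = dyadic_index n t"
  define f where "f = \<lfloor>real N * t\<rfloor>"
  have N: "1 \<le> N" "(2::real) ^ n = real N"
    by (simp_all add: N_def)
  have f: "0 \<le> f" "real_of_int f \<le> real N * t" "real N * t < real_of_int f + 1"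
    using t by (simp_all add: f_def)
  have k: "k = min (nat f) (N - 1)"
    by (simp add: k_def dyadic_index_def f_def N_def)
  have k_le: "real k \<le> real N * t" "k + 1 \<le> N"
    using f N by (simp_all add: k)
  have le_k: "real N * t \<le> real k + 1"
  proof (cases "nat f \<le> N - 1")
    case True
    then show ?thesis
      using f by (simp add: k)
  next
    case False
    then show ?thesis
      using N t by (simp add: k)
  qed
  have left: "dyadic_left n t = real k / real N" and right: "dyadic_right n t = (real k + 1) / real N"
    by (simp_all add: dyadic_left_def dyadic_right_def k_def N)
  have "0 < real N"
    using N by simp
  then show "0 \<le> dyadic_left n t" "dyadic_left n t \<le> t" "t \<le> dyadic_right n t" "dyadic_right n t \<le> 1"
    using k_le le_k by (simp_all add: left right field_simps)
  have "2 ^ n * (t - dyadic_left n t) = real N * t - real k"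
    using \<open>0 < real N\<close> by (simp add: left N field_simps)
  then show "0 \<le> 2 ^ n * (t - dyadic_left n t)" "2 ^ n * (t - dyadic_left n t) \<le> 1"
    using k_le le_k by simp_all
  have "dyadic_right n t - dyadic_left n t = 1 / 2 ^ n"
    by (simp add: dyadic_right_def dyadic_left_def field_simps)
  also have "\<dots> = 2 powr - real n"
    by (simp add: powr_minus powr_realpow divide_inverse)
  finally show "dyadic_right n t - dyadic_left n t = 2 powr - real n" .
qed

lemma incr_self [simp]: "incr x a a = gid"
  by (simp add: incr_def)

lemma incr_swap: "incr x a b = ginv (incr x b a)"
  by (simp add: incr_def ginv_gmul)

lemma gmul_incr: "gmul (x a) (incr x a s) = x s"
  by (simp add: incr_def gmul_assoc[symmetric])

lemma incr_Gset: "is_Gpath x \<Longrightarrow> u \<in> {0..1} \<Longrightarrow> v \<in> {0..1} \<Longrightarrow> incr x u v \<in> Gset"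
  by (auto simp: is_Gpath_def incr_def intro!: Gset_gmul Gset_ginv)

lemma incr_via_anchors:
  assumes "y s = gmul (x a) P" "y t = gmul (x b) Q"
  shows "incr y s t = gmul (gmul (ginv P) (incr x a b)) Q"
  using assms by (simp add: incr_def ginv_gmul gmul_assoc)

lemma ccnorm_incr_upsilon_le:
  fixes x :: "real \<Rightarrow> ('d::finite) grp"
  assumes x: "is_Gpath x" and r: "0 \<le> r" "r \<le> R"
    and small: "\<And>u v. 0 \<le> u \<Longrightarrow> u < v \<Longrightarrow> v \<le> 1 \<Longrightarrow> v - u \<le> 2 powr - real n
      \<Longrightarrow> ccnorm (incr x u v) \<le> r"
    and large: "\<And>u v. 0 \<le> u \<Longrightarrow> u < v \<Longrightarrow> v \<le> 1 \<Longrightarrow> ccnorm (incr x u v) \<le> R"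
    and st: "s \<in> {0..1}" "t \<in> {0..1}"
  shows "ccnorm (gmul (ginv (incr x s t)) (incr (upsilon n x) s t))
    \<le> 8 * (1 + 4 * CARD('d)) * sqrt (r * R)"
proof -
  let ?a = "dyadic_left n" and ?b = "dyadic_right n"
  let ?E = "\<lambda>u. incr x (?a u) u" and ?D = "\<lambda>u. dil (2 ^ n * (u - ?a u)) (incr x (?a u) (?b u))"
  define M where "M = incr x (?a s) (?a t)"
  have E: "?E u \<in> Gset \<and> gbounded r (r\<^sup>2) (?E u)" if "u \<in> {0..1}" for u
  proof (cases "?a u = u")
    case True
    then show ?thesis
      using r Gset_gid[unfolded gid_def] by (simp add: gbounded_def gid_def)
  next
    case False
    then show ?thesis
      using that dyadic_interval[of u n] small[of "?a u" u] x
      by (auto intro!: gbounded_if_ccnorm_le incr_Gset)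
  qed
  have D: "?D u \<in> Gset \<and> gbounded r (r\<^sup>2) (?D u)" if "u \<in> {0..1}" for u
  proof -
    note dy = dyadic_interval[of u n]
    have "?a u < ?b u"
      using that dy(5) by (auto simp: algebra_simps)
    then have "incr x (?a u) (?b u) \<in> Gset \<and> gbounded r (r\<^sup>2) (incr x (?a u) (?b u))"
      using that dy small[of "?a u" "?b u"] x by (auto intro!: gbounded_if_ccnorm_le incr_Gset)
    then show ?thesis
      using that dy by (auto intro!: Gset_dil gbounded_dil)
  qed
  have fst_incr: "norm (fst (incr x u v)) \<le> R" if "u \<in> {0..1}" "v \<in> {0..1}" "u < v" for u v
    using that large[of u v] ccnorm_ge(1)[OF incr_Gset[OF x that(1,2)]] by auto
  have "norm (fst M) \<le> R"
  proof (cases "?a s" "?a t" rule: linorder_cases)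
    case less
    then show ?thesis
      using dyadic_interval[of s n] dyadic_interval[of t n] st fst_incr by (simp add: M_def)
  next
    case equal
    then show ?thesis
      using r by (simp add: M_def gid_def)
  next
    case greater
    then show ?thesis
      using dyadic_interval[of s n] dyadic_interval[of t n] st fst_incr[of "?a t" "?a s"]
      by (simp add: M_def incr_swap[of x "?a s"])
  qed
  moreover have "M \<in> Gset"
    using dyadic_interval[of s n] dyadic_interval[of t n] st by (auto simp: M_def intro!: incr_Gset x)
  moreover have "incr x s t = gmul (gmul (ginv (?E s)) M) (?E t)"
    unfolding M_def by (rule incr_via_anchors) (simp_all add: gmul_incr)
  moreover have "incr (upsilon n x) s t = gmul (gmul (ginv (?D s)) M) (?D t)"
    unfolding M_def by (rule incr_via_anchors) (simp_all add: upsilon_eq)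
  ultimately show ?thesis
    using E[OF st(1)] E[OF st(2)] D[OF st(1)] D[OF st(2)] r
    by (metis ccnorm_perturbation_le)
qed

lemma dinf_upsilon_le:
  fixes x :: "real \<Rightarrow> ('d::finite) grp"
  assumes "is_Gpath x" "0 \<le> r" "r \<le> R"
    and "\<And>u v. 0 \<le> u \<Longrightarrow> u < v \<Longrightarrow> v \<le> 1 \<Longrightarrow> v - u \<le> 2 powr - real n
      \<Longrightarrow> ccnorm (incr x u v) \<le> r"
    and "\<And>u v. 0 \<le> u \<Longrightarrow> u < v \<Longrightarrow> v \<le> 1 \<Longrightarrow> ccnorm (incr x u v) \<le> R"
  shows "dinf x (upsilon n x) \<le> ereal (8 * (1 + 4 * CARD('d)) * sqrt (r * R))"
  unfolding dinf_def using ccnorm_incr_upsilon_le[OF assms] by (auto intro!: SUP_least)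

lemma ccnorm_incr_le_hnorm:
  assumes "hnorm \<psi> x = ereal K" "0 \<le> s" "s < t" "t \<le> 1" "0 < \<psi> (t - s)"
  shows "ccnorm (incr x s t) \<le> K * \<psi> (t - s)"
proof -
  have "ereal (ccnorm (incr x s t) / \<psi> (t - s)) \<le> hnorm \<psi> x"
    unfolding hnorm_def by (rule SUP_upper2[of "(s, t)"]) (use assms in auto)
  then show ?thesis
    using assms by (simp add: divide_le_eq)
qed

lemma ccnorm_incr_le_phi:
  assumes "hnorm (phi p) x = ereal K" "0 \<le> K" "0 < p"
    and "0 \<le> u" "u < v" "v \<le> 1" "v - u \<le> h" "h \<le> 1"
  shows "ccnorm (incr x u v) \<le> K * phi p h"
proof -
  have "ccnorm (incr x u v) \<le> K * phi p (v - u)"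
    using assms by (intro ccnorm_incr_le_hnorm phi_pos) auto
  also have "\<dots> \<le> K * phi p h"
    using assms by (intro mult_left_mono phi_mono) auto
  finally show ?thesis .
qed

theorem mainTheorem19:
  fixes p :: real
  assumes "CARD('d) \<ge> 2" and "2 < p" and "p < 3"
  shows "\<exists>C::real. \<forall>(n::nat) (x :: real \<Rightarrow> ('d::finite) grp).
           is_Gpath x \<and> 0 < hnorm (phi p) x \<and> hnorm (phi p) x < \<infinity> \<longrightarrow>
           dinf x (upsilon n x) \<le> ereal (C * sqrt (phi p (2 powr - real n))) * hnorm (phi p) x"
proof (intro exI[of _ "8 * (1 + 4 * CARD('d)) * sqrt (phi p 1)"] allI impI)
  fix n :: nat and x :: "real \<Rightarrow> 'd grp"
  assume x: "is_Gpath x \<and> 0 < hnorm (phi p) x \<and> hnorm (phi p) x < \<infinity>"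
  then obtain K where K: "hnorm (phi p) x = ereal K" "0 < K"
    by (cases "hnorm (phi p) x") auto
  have p: "0 < p"
    using assms by simp
  have h: "0 < 2 powr - real n" "2 powr - real n \<le> 1"
    using powr_mono[of "- real n" 0 2] by simp_all
  have "dinf x (upsilon n x)
      \<le> ereal (8 * (1 + 4 * CARD('d)) * sqrt ((K * phi p (2 powr - real n)) * (K * phi p 1)))"
  proof (rule dinf_upsilon_le)
    have "0 < phi p (2 powr - real n)"
      using p h by (intro phi_pos)
    then show "0 \<le> K * phi p (2 powr - real n)"
      using K by simp
    show "K * phi p (2 powr - real n) \<le> K * phi p 1"
      using K p h by (intro mult_left_mono phi_mono) auto
  qed (use x K p h in \<open>auto intro: ccnorm_incr_le_phi\<close>)
  also have "\<dots> = ereal (8 * (1 + 4 * CARD('d)) * sqrt (phi p 1) * sqrt (phi p (2 powr - real n)))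
      * hnorm (phi p) x"
    using K by (simp add: real_sqrt_mult)
  finally show "dinf x (upsilon n x)
      \<le> ereal (8 * (1 + 4 * CARD('d)) * sqrt (phi p 1) * sqrt (phi p (2 powr - real n))) * hnorm (phi p) x" .
qed

end
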